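(* Let $\mathbf{u}=(u_n)$ be an a-sequence with bounded ratio sequence $(q_n)$. Write $S^*_\mathbf{u}=\{m_1<m_2<\cdots\}$ and $\delta_k=m_{k+1}-m_k$. Then: (a) if the sequence $(\delta_k)$ is unbounded, there are $\mathfrak{c}$ many elements $x\in\mathbb{T}$ with $\varrho_\mathbf{u}(x,0)=\frac{1}{q_\mathbf{u}}$; (b) if the sequence $(\delta_k)$ is bounded, then $|B^{\varrho_\mathbf{u}}_{1/q_\mathbf{u}}(0)|=\mathfrak{c}$.
   Context: An a-sequence is a strictly increasing sequence of integers $\mathbf{u}=(u_n)_{n\in\mathbb{N}}$ with $u_n\mid u_{n+1}$ for all $n$. Its ratios are $q_0=u_0$ and $q_n=u_n/u_{n-1}$ ($n>0$); $q_\mathbf{u}=\limsup_n q_n$ and $S^*_\mathbf{u}=\{m\in\mathbb{N}: q_m=q_\mathbf{u}\}$ (infinite when the ratios are bounded). $\mathbb{T}=\mathbb{R}/\mathbb{Z}$, $\|x\|$ is the distance from $x$ to the nearest integer, $d(x,y)=\|x-y\|$, $\varrho_\mathbf{u}(x,y)=\sup_n\max\{d(x,y),d(u_nx,u_ny)\}$, and $B^{\varrho_\mathbf{u}}_\varepsilon(0)=\{x\in\mathbb{T}:\varrho_\mathbf{u}(x,0)<\varepsilon\}$. $\mathfrak{c}$ denotes the cardinality of the continuum. *)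

theory Defs
  imports Complex_Main "HOL-Library.Extended_Real" "HOL-Library.Liminf_Limsup" "HOL-Library.Infinite_Set"
    "HOL-Library.Equipollence"
begin

definition a_seq :: "(nat \<Rightarrow> nat) \<Rightarrow> bool" where
  "a_seq u \<longleftrightarrow> strict_mono u \<and> (\<forall>n. u n dvd u (Suc n))"

definition ratio :: "(nat \<Rightarrow> nat) \<Rightarrow> nat \<Rightarrow> nat" where
  "ratio u n = (if n = 0 then u 0 else u n div u (n - 1))"

definition q_lim :: "(nat \<Rightarrow> nat) \<Rightarrow> real" where
  "q_lim u = real_of_ereal (limsup (\<lambda>n. ereal (real (ratio u n))))"

definition S_star :: "(nat \<Rightarrow> nat) \<Rightarrow> nat set" where
  "S_star u = {m. real (ratio u m) = q_lim u}"

definition delta :: "(nat \<Rightarrow> nat) \<Rightarrow> nat \<Rightarrow> nat" where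
  "delta u k = enumerate (S_star u) (Suc k) - enumerate (S_star u) k"

text \<open>distance to nearest integer; the torus T = R/Z is represented by [0,1)\<close>
definition tnorm :: "real \<Rightarrow> real" where
  "tnorm x = \<bar>x - of_int (round x)\<bar>"

definition rho_u :: "(nat \<Rightarrow> nat) \<Rightarrow> real \<Rightarrow> real \<Rightarrow> real" where
  "rho_u u x y = (SUP n. max (tnorm (x - y)) (tnorm (real (u n) * x - real (u n) * y)))"

end

(* Let Q = q_u; since the ratios are bounded, Q is attained by the ratios at the infinitely many
   indices of S*. For peaks m_0 < m_1 < ... in S* (so u(m_j) = Q u(m_j - 1)) consider
   x = sum_j (-1)^j / u(m_j). Modulo 1, u_n x is the tail u_n sum_{m_j > n} (-1)^j / u(m_j), and
   with r_j = u(m_j) / u(m_{j+1}) <= 1/4 this tail lies within (1 - 2/3 r_j) / Q of 0 for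
   m_{j-1} <= n < m_j, while at n = m_j - 1 it has absolute value at least (1 - 4/3 r_j) / Q.
   If the peaks are chosen ever sparser, r_j -> 0 and rho(x,0) = 1/Q; if consecutive peaks are a
   bounded number of indices apart (possible when the gaps of S* are bounded), the bounded ratios
   keep r_j away from 0 and rho(x,0) < 1/Q. Moving the j-th peak to the next element of S* exactly
   when j lies in a given set b of naturals makes b -> x injective, because the tails have absolute
   value below 1/2 and therefore determine the signs. In particular part (a) holds without the
   hypothesis that the gaps of S* are unbounded. *)

theory Submission
  imports Defs "HOL-Analysis.Abstract_Topology_2"
begin

lemma tnorm_add_Ints:
  assumes "z \<in> \<int>"
  shows "tnorm (y + z) = tnorm y"
proof -
  obtain m where m: "z = of_int m" using assms by (auto elim: Ints_cases)
  have "y + of_int m + 1/2 = (y + 1/2) + of_int m" by simp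
  hence "round (y + of_int m) = round y + m" unfolding round_def by (simp only: floor_add_int)
  thus ?thesis unfolding tnorm_def m by simp
qed

lemma tnorm_eq_abs: "\<bar>y\<bar> < 1/2 \<Longrightarrow> tnorm y = \<bar>y\<bar>"
  unfolding tnorm_def by (subst round_unique'[of y 0]) simp_all

lemma tnorm_le_half: "tnorm y \<le> 1/2"
  unfolding tnorm_def using of_int_round_abs_le[of y] by (simp add: abs_minus_commute)

lemma tnorm_le_abs: "tnorm y \<le> \<bar>y\<bar>"
  using tnorm_eq_abs[of y] tnorm_le_half[of y] by (cases "\<bar>y\<bar> < 1/2") auto

lemma rho_u_0: "rho_u u x 0 = (SUP n. max (tnorm x) (tnorm (u n * x)))"
  unfolding rho_u_def by simp

lemma add_mult_le_of_gaps:
  fixes f :: "nat \<Rightarrow> nat"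
  assumes gap: "\<And>k. f k + d \<le> f (Suc k)" and "i \<le> j"
  shows "f i + (j - i) * d \<le> f j"
  using \<open>i \<le> j\<close>
proof (induction j rule: dec_induct)
  case (step j)
  have "f i + (Suc j - i) * d = f i + (j - i) * d + d" using step.hyps by (simp add: Suc_diff_le)
  also have "\<dots> \<le> f (Suc j)" using step.IH gap[of j] by simp
  finally show ?case .
qed simp

lemma le_add_mult_of_gaps:
  fixes f :: "nat \<Rightarrow> nat"
  assumes gap: "\<And>k. f (Suc k) \<le> f k + d" and "i \<le> j"
  shows "f j \<le> f i + (j - i) * d"
  using \<open>i \<le> j\<close>
proof (induction j rule: dec_induct)
  case (step j)
  have "f (Suc j) \<le> f i + (j - i) * d + d" using step.IH gap[of j] by simp
  also have "\<dots> = f i + (Suc j - i) * d" using step.hyps by (simp add: Suc_diff_le)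
  finally show ?case .
qed simp

lemma add_le_of_gaps:
  fixes f :: "nat \<Rightarrow> nat"
  assumes gap: "\<And>k. f k + d \<le> f (Suc k)" and "i < j"
  shows "f i + d \<le> f j"
proof -
  have "f i + (j - i) * d \<le> f j" using assms by (intro add_mult_le_of_gaps[of f d, OF gap]) simp
  moreover have "1 * d \<le> (j - i) * d" using \<open>i < j\<close> by (intro mult_le_mono1) simp
  ultimately show ?thesis by linarith
qed

lemma enumerate_add_diff_le:
  fixes S :: "nat set"
  assumes "infinite S" and "a \<le> c"
  shows "enumerate S a + (c - a) \<le> enumerate S c"
  using add_mult_le_of_gaps[of "enumerate S" 1 a c] enumerate_step[OF assms(1)] assms(2)
  by (simp add: Suc_le_eq)

lemma Limsup_eq_of_frequently_eq:
  fixes f :: "'a \<Rightarrow> 'b::complete_linorder"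
  assumes "\<exists>\<^sub>F x in F. f x = L" and "\<forall>\<^sub>F x in F. f x \<le> L"
  shows "Limsup F f = L"
proof (rule antisym)
  show "Limsup F f \<le> L" using assms(2) by (rule Limsup_bounded)
  show "L \<le> Limsup F f"
  proof (rule ccontr)
    assume "\<not> L \<le> Limsup F f"
    hence "\<forall>\<^sub>F x in F. f x < L" by (intro Limsup_lessD) simp
    with assms(1) have "\<exists>\<^sub>F x in F. f x < L \<and> f x = L" by (rule frequently_eventually_conj)
    thus False by (auto dest: frequently_ex)
  qed
qed

lemma bounded_nat_seq_max_recurrent_value:
  fixes f :: "nat \<Rightarrow> nat"
  assumes bound: "\<And>n. f n \<le> B"
  obtains L where "\<exists>\<^sub>F n in sequentially. f n = L" and "\<forall>\<^sub>F n in sequentially. f n \<le> L"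
proof -
  define V where "V = {v. infinite {n. f n = v}}"
  have "V \<subseteq> {..B}"
  proof
    fix v assume "v \<in> V"
    then obtain n where "f n = v" unfolding V_def using infinite_imp_nonempty by fastforce
    thus "v \<in> {..B}" using bound[of n] by simp
  qed
  hence fin: "finite V" by (rule finite_subset) simp
  have "range f \<subseteq> {..B}" using bound by auto
  hence "finite (range f)" by (rule finite_subset) simp
  then obtain n0 where "infinite {n \<in> UNIV. f n = f n0}"
    using pigeonhole_infinite[OF infinite_UNIV_nat] by blast
  hence "f n0 \<in> V" unfolding V_def by simp
  define L where "L = Max V"
  have "L \<in> V" unfolding L_def using fin \<open>f n0 \<in> V\<close> by (intro Max_in) auto
  have "finite {n. f n = v}" if "L < v" for v
  proof (rule ccontr)
    assume "infinite {n. f n = v}"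
    hence "v \<in> V" unfolding V_def by simp
    hence "v \<le> L" unfolding L_def using fin by (rule Max_ge[rotated])
    with that show False by simp
  qed
  hence "finite (\<Union>v\<in>{L<..B}. {n. f n = v})" by (intro finite_UN_I) simp_all
  moreover have "{n. \<not> f n \<le> L} \<subseteq> (\<Union>v\<in>{L<..B}. {n. f n = v})"
  proof
    fix n assume "n \<in> {n. \<not> f n \<le> L}"
    hence "f n \<in> {L<..B}" using bound[of n] by simp
    thus "n \<in> (\<Union>v\<in>{L<..B}. {n. f n = v})" by blast
  qed
  ultimately have "\<forall>\<^sub>F n in sequentially. f n \<le> L"
    unfolding cofinite_eq_sequentially[symmetric] eventually_cofinite by (rule finite_subset[rotated])
  moreover have "\<exists>\<^sub>F n in sequentially. f n = L"
    using \<open>L \<in> V\<close> unfolding V_def cofinite_eq_sequentially[symmetric] frequently_cofinite by simp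
  ultimately show thesis using that by blast
qed

locale a_sequence =
  fixes u :: "nat \<Rightarrow> nat"
  assumes a_seq: "a_seq u"
begin

lemma u_strict_mono: "strict_mono u"
  using a_seq unfolding a_seq_def by blast

lemma u_dvd_Suc: "u n dvd u (Suc n)"
  using a_seq unfolding a_seq_def by blast

lemma u_mono: "m \<le> n \<Longrightarrow> u m \<le> u n"
  using u_strict_mono by (simp add: strict_mono_less_eq)

lemma u_dvd_mono: "m \<le> n \<Longrightarrow> u m dvd u n"
  by (induction n rule: dec_induct) (auto intro: dvd_trans u_dvd_Suc)

lemma u_pos: "0 < u n"
proof -
  have "u 0 \<noteq> 0"
    using u_dvd_Suc[of 0] strict_monoD[OF u_strict_mono, of 0 1] by auto
  thus ?thesis using u_mono[of 0 n] by simp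
qed

lemma u_Suc_eq_ratio_mult: "u (Suc n) = ratio u (Suc n) * u n"
  unfolding ratio_def using u_dvd_Suc[of n] by simp

lemma ratio_ge_2: "1 \<le> n \<Longrightarrow> 2 \<le> ratio u n"
proof -
  assume "1 \<le> n"
  then obtain m where n: "n = Suc m" by (cases n) auto
  have "u m < ratio u n * u m"
    using strict_monoD[OF u_strict_mono, of m "Suc m"] u_Suc_eq_ratio_mult[of m] n by simp
  hence "1 < ratio u n" by simp
  thus ?thesis by simp
qed

lemma u_Suc_ge_double: "2 * u n \<le> u (Suc n)"
  using ratio_ge_2[of "Suc n"] u_Suc_eq_ratio_mult[of n] by simp

lemma u_add_ge_pow2_mult: "2 ^ i * u n \<le> u (n + i)"
proof (induction i)
  case (Suc i)
  have "2 ^ Suc i * u n \<le> 2 * u (n + i)" using Suc.IH by simp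
  also have "\<dots> \<le> u (n + Suc i)" using u_Suc_ge_double[of "n + i"] by simp
  finally show ?case .
qed simp

lemma u_ge_pow2: "2 ^ n \<le> u n"
proof -
  have "2 ^ n \<le> 2 ^ n * u 0" using u_pos[of 0] by simp
  also have "\<dots> \<le> u n" using u_add_ge_pow2_mult[of n 0] by simp
  finally show ?thesis .
qed

lemma u_add_le_pow_mult:
  assumes "\<And>k. u (Suc k) \<le> B * u k"
  shows "u (n + d) \<le> B ^ d * u n"
proof (induction d)
  case (Suc d)
  have "u (n + Suc d) \<le> B * u (n + d)" using assms[of "n + d"] by simp
  also have "\<dots> \<le> B * (B ^ d * u n)" using Suc.IH by simp
  finally show ?case by (simp add: mult.assoc)
qed simp

lemma q_lim_recurrent:
  assumes bound: "\<And>n. ratio u n \<le> B"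
  obtains Q :: nat where "q_lim u = real Q" and "2 \<le> Q" and "infinite {m. ratio u m = Q}"
proof -
  obtain Q where freq: "\<exists>\<^sub>F n in sequentially. ratio u n = Q"
    and ev: "\<forall>\<^sub>F n in sequentially. ratio u n \<le> Q"
    by (rule bounded_nat_seq_max_recurrent_value[OF bound])
  have "limsup (\<lambda>n. ereal (real (ratio u n))) = ereal (real Q)"
  proof (rule Limsup_eq_of_frequently_eq)
    show "\<exists>\<^sub>F n in sequentially. ereal (real (ratio u n)) = ereal (real Q)"
      using freq by (rule frequently_elim1) simp
    show "\<forall>\<^sub>F n in sequentially. ereal (real (ratio u n)) \<le> ereal (real Q)"
      using ev by (rule eventually_mono) simp
  qed
  hence "q_lim u = real Q" unfolding q_lim_def by simp
  moreover have inf: "infinite {m. ratio u m = Q}"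
    using freq unfolding cofinite_eq_sequentially[symmetric] frequently_cofinite .
  moreover obtain m where "1 \<le> m" "m \<in> {m. ratio u m = Q}"
    using inf unfolding infinite_nat_iff_unbounded_le by blast
  hence "2 \<le> Q" using ratio_ge_2[of m] by simp
  ultimately show thesis using that by blast
qed

end

section \<open>Alternating sums along peaks\<close>

locale alternating_point = a_sequence +
  fixes Q :: nat and s :: "nat \<Rightarrow> nat"
  assumes Q_ge_2: "2 \<le> Q"
    and u_peak: "\<And>j. u (s j) = Q * u (s j - 1)"
    and s_gap: "\<And>j. s j + 2 \<le> s (Suc j)"
    and s_0: "1 \<le> s 0" \<comment> \<open>so that \<open>s j - 1\<close> is the index just before a peak\<close>
begin

definition digit :: "nat \<Rightarrow> real" where
  "digit k = (if k \<in> range s then (-1) ^ the_inv s k else 0)"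

definition point :: real where
  "point = (\<Sum>k. digit k / u k)"

definition tail :: "nat \<Rightarrow> real" where
  "tail n = u n * (\<Sum>i. digit (i + Suc n) / u (i + Suc n))"

definition step_ratio :: "nat \<Rightarrow> real" where
  "step_ratio j = u (s j) / u (s (Suc j))"

lemma s_strict_mono: "strict_mono s"
  unfolding strict_mono_Suc_iff
proof
  show "s n < s (Suc n)" for n using s_gap[of n] by simp
qed

lemma digit_s: "digit (s j) = (-1) ^ j"
  unfolding digit_def using the_inv_f_f[OF strict_mono_imp_inj_on[OF s_strict_mono]] by simp

lemma digit_eq_0: "k \<notin> range s \<Longrightarrow> digit k = 0"
  unfolding digit_def by simp

lemma digit_eq_0_between:
  assumes "k < s j" and "\<And>i. i < j \<Longrightarrow> s i < k"
  shows "digit k = 0"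
proof (rule digit_eq_0, rule notI)
  assume "k \<in> range s"
  then obtain i where i: "k = s i" by auto
  show False
  proof (cases "i < j")
    case True with assms(2)[OF True] i show False by simp
  next
    case False
    hence "s j \<le> s i" using strict_mono_less_eq[OF s_strict_mono] by simp
    with assms(1) i show False by simp
  qed
qed

lemma digit_0: "digit 0 = 0"
  using digit_eq_0_between[of 0 0] s_0 by simp

lemma digit_between_peaks:
  assumes "s j < k" and "k < s (Suc j)"
  shows "digit k = 0"
proof (rule digit_eq_0_between[OF assms(2)])
  fix i assume "i < Suc j"
  hence "s i \<le> s j" using strict_mono_less_eq[OF s_strict_mono] by simp
  with assms(1) show "s i < k" by simp
qed

lemma abs_digit_le_1: "\<bar>digit k\<bar> \<le> 1"
  unfolding digit_def by auto

lemma digit_Ints: "digit k \<in> \<int>"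
  unfolding digit_def by auto

lemma abs_digit_div_le: "\<bar>digit k / u k\<bar> \<le> 1 / u k"
  using abs_digit_le_1[of k] u_pos[of k] by (simp add: divide_right_mono)

lemma summable_digits: "summable (\<lambda>k. digit k / u k)"
proof (rule summable_comparison_test'[of "\<lambda>k. (1/2::real) ^ k" 0])
  fix k :: nat
  have "real (2 ^ k) \<le> u k" using u_ge_pow2 of_nat_le_iff by blast
  hence "1 / real (u k) \<le> (1/2) ^ k" by (simp add: frac_le power_one_over)
  thus "norm (digit k / u k) \<le> (1/2) ^ k" using abs_digit_div_le[of k] by simp
qed simp

lemma tail_Suc: "tail n = (u n / u (Suc n)) * (digit (Suc n) + tail (Suc n))"
proof -
  have "summable (\<lambda>i. digit (i + Suc n) / u (i + Suc n))"
    using summable_digits by (rule summable_iff_shift[THEN iffD2])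
  from suminf_split_head[OF this]
  have "(\<Sum>i. digit (i + Suc n) / u (i + Suc n))
      = digit (Suc n) / u (Suc n) + (\<Sum>i. digit (i + Suc (Suc n)) / u (i + Suc (Suc n)))"
    by simp
  thus ?thesis unfolding tail_def using u_pos[of "Suc n"] by (simp add: field_simps)
qed

lemma tail_skip:
  assumes "n < m" and "\<And>k. n < k \<Longrightarrow> k < m \<Longrightarrow> digit k = 0"
  shows "tail n = (u n / u m) * (digit m + tail m)"
  using assms
proof (induction m)
  case (Suc m)
  show ?case
  proof (cases "n = m")
    case False
    hence "tail n = (u n / u m) * (digit m + tail m)" using Suc by simp
    also have "digit m = 0" using Suc.prems False by simp
    finally show ?thesis using tail_Suc[of m] u_pos[of m] by simp
  qed (use tail_Suc[of m] in simp)
qed simp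

lemma u_mult_point_minus_tail_Ints: "u n * point - tail n \<in> \<int>"
proof -
  have "point = (\<Sum>i. digit (i + Suc n) / u (i + Suc n)) + (\<Sum>k<Suc n. digit k / u k)"
    unfolding point_def by (rule suminf_split_initial_segment[OF summable_digits])
  hence "u n * point - tail n = (\<Sum>k<Suc n. digit k * (u n / u k))"
    unfolding tail_def by (simp add: algebra_simps sum_distrib_left)
  also have "\<dots> \<in> \<int>"
  proof (rule Ints_sum)
    fix k assume "k \<in> {..<Suc n}"
    then obtain c where "u n = u k * c" using u_dvd_mono by (meson dvdE lessThan_iff less_Suc_eq_le)
    hence "u n / u k = real c" using u_pos[of k] by simp
    thus "digit k * (u n / u k) \<in> \<int>" using digit_Ints by simp
  qed
  finally show ?thesis .
qed

lemma u_0_mult_point: "u 0 * point = tail 0"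
proof -
  have "point = (\<Sum>i. digit (i + Suc 0) / u (i + Suc 0)) + (\<Sum>k<Suc 0. digit k / u k)"
    unfolding point_def by (rule suminf_split_initial_segment[OF summable_digits])
  thus ?thesis unfolding tail_def using digit_0 by simp
qed

lemma abs_tail_le_1: "\<bar>tail n\<bar> \<le> 1"
proof -
  define g where "g i = (1/2::real) ^ Suc i / u n" for i
  have "norm (digit (i + Suc n) / u (i + Suc n)) \<le> g i" for i
  proof -
    have "real (2 ^ Suc i * u n) \<le> u (i + Suc n)"
      unfolding of_nat_le_iff using u_add_ge_pow2_mult[of "Suc i" n] by (simp add: add.commute)
    hence "1 / real (u (i + Suc n)) \<le> 1 / real (2 ^ Suc i * u n)"
      using u_pos[of n] u_pos[of "i + Suc n"] by (intro divide_left_mono) simp_all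
    thus ?thesis using abs_digit_div_le[of "i + Suc n"] unfolding g_def by (simp add: power_one_over)
  qed
  moreover have "g sums (1 / u n)"
    unfolding g_def using sums_divide[OF sums_mult[OF geometric_sums[of "1/2::real"], of "1/2"], of "u n"]
    by simp
  ultimately have "\<bar>\<Sum>i. digit (i + Suc n) / u (i + Suc n)\<bar> \<le> 1 / u n"
    using norm_suminf_le[of "\<lambda>i. digit (i + Suc n) / u (i + Suc n)" g] sums_unique[of g]
    by (force simp: sums_summable)
  hence "\<bar>tail n\<bar> \<le> u n * (1 / u n)"
    unfolding tail_def abs_mult abs_of_nat using u_pos[of n] by (intro mult_left_mono) simp_all
  thus ?thesis using u_pos[of n] by simp
qed

lemma step_ratio_pos: "0 < step_ratio j"
  unfolding step_ratio_def using u_pos by simp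

lemma step_ratio_le_quarter: "step_ratio j \<le> 1/4"
proof -
  have "Suc (s j) \<le> s (Suc j) - 1" using s_gap[of j] by simp
  hence "2 * u (s j) \<le> u (s (Suc j) - 1)" using u_Suc_ge_double[of "s j"] u_mono by (meson le_trans)
  hence "2 * (2 * u (s j)) \<le> 2 * u (s (Suc j) - 1)" by simp
  also have "\<dots> \<le> u (s (Suc j))" using u_peak[of "Suc j"] Q_ge_2 by simp
  finally have "4 * real (u (s j)) \<le> u (s (Suc j))" by linarith
  thus ?thesis unfolding step_ratio_def using u_pos[of "s (Suc j)"] by (simp add: field_simps)
qed

lemma tail_peak: "tail (s j) = step_ratio j * ((-1) ^ Suc j + tail (s (Suc j)))"
proof -
  have "s j < s (Suc j)" using s_gap[of j] by simp
  from tail_skip[OF this digit_between_peaks] show ?thesis unfolding step_ratio_def digit_s by simp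
qed

lemma abs_tail_peak_le: "\<bar>tail (s j)\<bar> \<le> 1/3"
proof -
  \<comment> \<open>iterating \<open>t \<mapsto> (1 + t) / 4\<close> from the crude bound 1 approaches its fixed point 1/3\<close>
  have approx: "\<bar>tail (s j)\<bar> \<le> 1/3 + 2/3 * (1/4) ^ k" for k
  proof (induction k arbitrary: j)
    case 0 show ?case using abs_tail_le_1[of "s j"] by simp
  next
    case (Suc k)
    have "\<bar>(-1) ^ Suc j + tail (s (Suc j))\<bar> \<le> 1 + \<bar>tail (s (Suc j))\<bar>"
      using abs_triangle_ineq[of "(-1) ^ Suc j" "tail (s (Suc j))"] by (simp add: power_abs)
    hence "\<bar>tail (s j)\<bar> \<le> step_ratio j * (1 + \<bar>tail (s (Suc j))\<bar>)"
      unfolding tail_peak[of j] abs_mult abs_of_pos[OF step_ratio_pos]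
      using step_ratio_pos[of j] by (intro mult_left_mono) simp_all
    also have "\<dots> \<le> 1/4 * (1 + (1/3 + 2/3 * (1/4) ^ k))"
      using Suc.IH[of "Suc j"] step_ratio_pos[of j] step_ratio_le_quarter[of j]
      by (intro mult_mono) auto
    finally show ?case by simp
  qed
  have "(\<lambda>k. 1/3 + 2/3 * (1/4::real) ^ k) \<longlonglongrightarrow> 1/3 + 2/3 * 0"
    by (intro tendsto_intros LIMSEQ_power_zero) simp
  thus ?thesis using approx by (intro LIMSEQ_le_const) auto
qed

lemma signed_tail_peak_bounds:
  shows "- 4/3 * step_ratio j \<le> (-1) ^ j * tail (s j)"
    and "(-1) ^ j * tail (s j) \<le> - 2/3 * step_ratio j"
proof -
  define t where "t = (-1) ^ j * tail (s (Suc j))"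
  have eq: "(-1) ^ j * tail (s j) = step_ratio j * (t - 1)"
    unfolding tail_peak[of j] t_def by (simp add: algebra_simps)
  have "\<bar>t\<bar> \<le> 1/3"
    using abs_tail_peak_le[of "Suc j"] unfolding t_def by (simp add: abs_mult power_abs)
  hence "step_ratio j * (-4/3) \<le> step_ratio j * (t - 1)" and "step_ratio j * (t - 1) \<le> step_ratio j * (-2/3)"
    using step_ratio_pos[of j] by (intro mult_left_mono; simp)+
  thus "- 4/3 * step_ratio j \<le> (-1) ^ j * tail (s j)"
    and "(-1) ^ j * tail (s j) \<le> - 2/3 * step_ratio j"
    unfolding eq by simp_all
qed

lemma signed_tail_before_peak:
  assumes "n < s j" and "\<And>k. n < k \<Longrightarrow> k < s j \<Longrightarrow> digit k = 0"
  shows "(-1) ^ j * tail n = (u n / u (s j)) * (1 + (-1) ^ j * tail (s j))"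
proof -
  define a where "a = u n / u (s j)"
  define \<sigma> :: real where "\<sigma> = (-1) ^ j"
  have "\<sigma> * \<sigma> = 1" unfolding \<sigma>_def by (simp flip: power_add)
  moreover have "tail n = a * (\<sigma> + tail (s j))"
    using tail_skip[OF assms] unfolding digit_s a_def \<sigma>_def .
  hence "\<sigma> * tail n = a * (\<sigma> * \<sigma> + \<sigma> * tail (s j))" by (simp add: algebra_simps)
  ultimately show ?thesis unfolding a_def \<sigma>_def by simp
qed

lemma abs_tail_before_peak:
  assumes "n < s j" and "\<And>k. n < k \<Longrightarrow> k < s j \<Longrightarrow> digit k = 0"
  shows "(u n / u (s j)) * (1 - 4/3 * step_ratio j) \<le> \<bar>tail n\<bar>"
    and "\<bar>tail n\<bar> \<le> (u n / u (s j)) * (1 - 2/3 * step_ratio j)"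
    and "0 < (-1) ^ j * tail n"
proof -
  define a where "a = u n / u (s j)"
  define z where "z = 1 + (-1) ^ j * tail (s j)"
  have a: "0 < a" unfolding a_def using u_pos by simp
  have z_lower: "1 - 4/3 * step_ratio j \<le> z" and z_upper: "z \<le> 1 - 2/3 * step_ratio j"
    unfolding z_def using signed_tail_peak_bounds[of j] by simp_all
  hence z: "0 < z" using step_ratio_le_quarter[of j] by simp
  have signed: "(-1) ^ j * tail n = a * z"
    unfolding a_def z_def by (rule signed_tail_before_peak[OF assms])
  show "0 < (-1) ^ j * tail n" unfolding signed using a z by simp
  have "\<bar>tail n\<bar> = \<bar>(-1) ^ j * tail n\<bar>" by (simp add: abs_mult power_abs)
  hence abs: "\<bar>tail n\<bar> = a * z" unfolding signed using a z by simp
  show "a * (1 - 4/3 * step_ratio j) \<le> \<bar>tail n\<bar>"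
    unfolding abs using a z_lower by (intro mult_left_mono) simp_all
  show "\<bar>tail n\<bar> \<le> a * (1 - 2/3 * step_ratio j)"
    unfolding abs using a z_upper by (intro mult_left_mono) simp_all
qed

lemma u_div_u_peak_le:
  assumes "n < s j"
  shows "u n / u (s j) \<le> 1 / Q"
proof -
  have "real (u n) \<le> u (s j - 1)" using u_mono[of n "s j - 1"] assms by simp
  hence "u n / u (s j) \<le> u (s j - 1) / (Q * u (s j - 1))"
    unfolding u_peak[of j] using u_pos[of "s j - 1"] Q_ge_2 by (intro divide_right_mono) simp_all
  also have "\<dots> = 1 / Q" using u_pos[of "s j - 1"] by simp
  finally show ?thesis .
qed

lemma u_pred_div_u_peak: "u (s j - 1) / u (s j) = 1 / Q"
  using u_peak[of j] u_pos[of "s j - 1"] by simp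

lemma next_peak: "\<exists>j. n < s j \<and> (\<forall>k. n < k \<longrightarrow> k < s j \<longrightarrow> digit k = 0)"
proof -
  have ex: "\<exists>j. n < s j"
    using strict_mono_imp_increasing[OF s_strict_mono, of "Suc n"] by (intro exI[of _ "Suc n"]) simp
  define j where "j = (LEAST j. n < s j)"
  have "n < s j" unfolding j_def using LeastI_ex[OF ex] .
  moreover have "digit k = 0" if "n < k" "k < s j" for k
  proof (rule digit_eq_0_between[OF that(2)])
    fix i assume "i < j"
    hence "s i \<le> n" using not_less_Least[of i "\<lambda>j. n < s j"] unfolding j_def by simp
    with that(1) show "s i < k" by simp
  qed
  ultimately show ?thesis by blast
qed

lemma abs_tail_le_some_peak: "\<exists>j. \<bar>tail n\<bar> \<le> (1/Q) * (1 - 2/3 * step_ratio j)"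
proof -
  obtain j where j: "n < s j" "\<And>k. n < k \<Longrightarrow> k < s j \<Longrightarrow> digit k = 0"
    using next_peak[of n] by blast
  have "\<bar>tail n\<bar> \<le> (u n / u (s j)) * (1 - 2/3 * step_ratio j)" by (rule abs_tail_before_peak(2)[OF j])
  also have "\<dots> \<le> (1/Q) * (1 - 2/3 * step_ratio j)"
    using u_div_u_peak_le[OF j(1)] step_ratio_le_quarter[of j] by (intro mult_right_mono) simp_all
  finally show ?thesis by blast
qed

lemma abs_tail_pred_peak_ge: "(1/Q) * (1 - 4/3 * step_ratio j) \<le> \<bar>tail (s j - 1)\<bar>"
proof -
  have "s 0 \<le> s j" using strict_mono_less_eq[OF s_strict_mono] by simp
  hence "s j - 1 < s j" using s_0 by simp
  from abs_tail_before_peak(1)[OF this] show ?thesis unfolding u_pred_div_u_peak by simp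
qed

lemma abs_tail_less_half: "\<bar>tail n\<bar> < 1/2"
proof -
  obtain j where "\<bar>tail n\<bar> \<le> (1/Q) * (1 - 2/3 * step_ratio j)" using abs_tail_le_some_peak by blast
  also have "\<dots> < 1/Q" using step_ratio_pos[of j] Q_ge_2 by (simp add: field_simps)
  also have "\<dots> \<le> 1/2" using Q_ge_2 by simp
  finally show ?thesis .
qed

lemma tnorm_u_mult_point: "tnorm (u n * point) = \<bar>tail n\<bar>"
  using tnorm_add_Ints[OF u_mult_point_minus_tail_Ints[of n], of "tail n"]
    tnorm_eq_abs[OF abs_tail_less_half[of n]]
  by simp

lemma tail_0_pos: "0 < tail 0"
  using abs_tail_before_peak(3)[of 0 0] digit_eq_0_between[of _ 0] s_0 by simp

lemma point_pos: "0 < point"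
proof -
  have "0 < u 0 * point" using u_0_mult_point tail_0_pos by simp
  thus ?thesis by (simp add: zero_less_mult_iff)
qed

lemma point_le_tail_0: "point \<le> tail 0"
proof -
  have "point * 1 \<le> point * u 0" using point_pos u_pos[of 0] by (intro mult_left_mono) simp_all
  thus ?thesis using u_0_mult_point by (simp add: mult.commute)
qed

lemma point_less_1: "point < 1"
  using point_le_tail_0 abs_tail_less_half[of 0] by simp

lemma rho_le:
  assumes "\<And>n. \<bar>tail n\<bar> \<le> c"
  shows "rho_u u point 0 \<le> c"
  unfolding rho_u_0
proof (rule cSUP_least)
  fix n
  have "tnorm point \<le> c"
    using tnorm_le_abs[of point] point_pos point_le_tail_0 assms[of 0] by simp
  thus "max (tnorm point) (tnorm (u n * point)) \<le> c"
    using assms[of n] by (simp add: tnorm_u_mult_point)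
qed simp

lemma abs_tail_le_rho: "\<bar>tail n\<bar> \<le> rho_u u point 0"
  unfolding rho_u_0
proof (rule cSUP_upper2[of _ _ n])
  show "bdd_above (range (\<lambda>n. max (tnorm point) (tnorm (u n * point))))"
  proof (rule bdd_aboveI)
    fix y assume "y \<in> range (\<lambda>n. max (tnorm point) (tnorm (u n * point)))"
    then obtain m where "y = max (tnorm point) (tnorm (u m * point))" by blast
    thus "y \<le> 1/2" using tnorm_le_half[of point] tnorm_le_half[of "u m * point"] by simp
  qed
qed (simp_all add: tnorm_u_mult_point)

lemma rho_eq_inv_Q:
  assumes sparse: "\<And>j. s j + j \<le> s (Suc j)"
  shows "rho_u u point 0 = 1 / Q"
proof (rule antisym)
  show "rho_u u point 0 \<le> 1 / Q"
  proof (rule rho_le)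
    fix n
    obtain j where "\<bar>tail n\<bar> \<le> (1/Q) * (1 - 2/3 * step_ratio j)" using abs_tail_le_some_peak by blast
    also have "\<dots> \<le> (1/Q) * 1" using step_ratio_pos[of j] by (intro mult_left_mono) simp_all
    finally show "\<bar>tail n\<bar> \<le> 1/Q" by simp
  qed
  have "step_ratio j \<le> (1/2) ^ j" for j
  proof -
    have "2 ^ j * u (s j) \<le> u (s (Suc j))"
      using u_add_ge_pow2_mult[of j "s j"] u_mono[OF sparse[of j]] by simp
    hence "2 ^ j * real (u (s j)) \<le> u (s (Suc j))" by (metis of_nat_le_iff of_nat_mult of_nat_numeral of_nat_power)
    thus ?thesis unfolding step_ratio_def using u_pos[of "s (Suc j)"]
      by (simp add: field_simps power_one_over)
  qed
  hence "(1/Q) * (1 - 4/3 * (1/2) ^ j) \<le> (1/Q) * (1 - 4/3 * step_ratio j)" for j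
    by (intro mult_left_mono) simp_all
  hence "(1/Q) * (1 - 4/3 * (1/2) ^ j) \<le> rho_u u point 0" for j
    using abs_tail_pred_peak_ge[of j] abs_tail_le_rho[of "s j - 1"] by (meson order_trans)
  moreover have "(\<lambda>j. (1/Q) * (1 - 4/3 * (1/2::real) ^ j)) \<longlonglongrightarrow> (1/Q) * (1 - 4/3 * 0)"
    by (intro tendsto_intros LIMSEQ_power_zero) simp
  ultimately show "1 / Q \<le> rho_u u point 0" by (intro LIMSEQ_le_const2[where a = "rho_u u point 0"]) auto
qed

lemma rho_less_inv_Q:
  assumes dense: "\<And>j. s (Suc j) \<le> s j + G" and growth: "\<And>k. u (Suc k) \<le> B * u k"
  shows "rho_u u point 0 < 1 / Q"
proof -
  have B: "1 \<le> B"
  proof (rule ccontr)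
    assume "\<not> 1 \<le> B"
    hence "B = 0" by simp
    hence "u 1 = 0" using growth[of 0] by simp
    thus False using u_pos[of 1] by simp
  qed
  have ratio_ge: "1 / B ^ G \<le> step_ratio j" for j
  proof -
    have "u (s (Suc j)) \<le> B ^ (s (Suc j) - s j) * u (s j)"
      using u_add_le_pow_mult[OF growth, of "s j" "s (Suc j) - s j"] s_gap[of j] by simp
    also have "\<dots> \<le> B ^ G * u (s j)"
      using dense[of j] B by (intro mult_right_mono power_increasing) auto
    finally have "real (u (s (Suc j))) \<le> real B ^ G * u (s j)" by (metis of_nat_le_iff of_nat_mult of_nat_power)
    thus ?thesis unfolding step_ratio_def using u_pos[of "s (Suc j)"] u_pos[of "s j"] B
      by (simp add: field_simps)
  qed
  have "rho_u u point 0 \<le> (1/Q) * (1 - 2/3 * (1 / B ^ G))"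
  proof (rule rho_le)
    fix n
    obtain j where "\<bar>tail n\<bar> \<le> (1/Q) * (1 - 2/3 * step_ratio j)" using abs_tail_le_some_peak by blast
    also have "\<dots> \<le> (1/Q) * (1 - 2/3 * (1 / B ^ G))" using ratio_ge[of j] by (intro mult_left_mono) auto
    finally show "\<bar>tail n\<bar> \<le> (1/Q) * (1 - 2/3 * (1 / B ^ G))" .
  qed
  also have "\<dots> < 1/Q" using Q_ge_2 B by (simp add: field_simps)
  finally show ?thesis .
qed

lemma digit_Suc: "digit (Suc n) = (u (Suc n) / u n) * tail n - tail (Suc n)"
  using tail_Suc[of n] u_pos[of n] u_pos[of "Suc n"] by (simp add: field_simps)

lemma range_s_eq_digit_support: "range s = {k. digit k \<noteq> 0}"
  using digit_s digit_eq_0 by force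

end

lemma alternating_point_range_eq:
  assumes "alternating_point u Q s" and "alternating_point u Q' s'"
    and point_eq: "alternating_point.point u s = alternating_point.point u s'"
  shows "range s = range s'"
proof -
  interpret A: alternating_point u Q s by fact
  interpret B: alternating_point u Q' s' by fact
  have tail_eq: "A.tail n = B.tail n" for n
  proof -
    have "A.tail n - B.tail n = (u n * B.point - B.tail n) - (u n * A.point - A.tail n)"
      using point_eq by simp
    also have "\<dots> \<in> \<int>"
      using B.u_mult_point_minus_tail_Ints A.u_mult_point_minus_tail_Ints by (rule Ints_diff)
    finally have "A.tail n - B.tail n \<in> \<int>" .
    moreover have "\<bar>A.tail n - B.tail n\<bar> < 1" using A.abs_tail_less_half[of n] B.abs_tail_less_half[of n] by linarith
    ultimately show ?thesis using Ints_nonzero_abs_less1[of "A.tail n - B.tail n"] by simp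
  qed
  have "A.digit k = B.digit k" for k
    using A.digit_0 B.digit_0 A.digit_Suc B.digit_Suc tail_eq by (cases k) simp_all
  thus ?thesis unfolding A.range_s_eq_digit_support B.range_s_eq_digit_support by simp
qed

lemma eqpoll_UNIV_real_of_inj:
  fixes F :: "nat set \<Rightarrow> real"
  assumes "inj F" and "range F \<subseteq> T"
  shows "T \<approx> (UNIV :: real set)"
proof (rule lepoll_antisym)
  show "T \<lesssim> (UNIV :: real set)" by (rule subset_imp_lepoll) simp
  have "(UNIV :: nat set set) \<lesssim> T" unfolding lepoll_def using assms by blast
  thus "(UNIV :: real set) \<lesssim> T"
    using nat_sets_eqpoll_reals eqpoll_sym eqpoll_imp_lepoll lepoll_trans by blast
qed

section \<open>Continuum many alternating points\<close>

definition shifted_index :: "(nat \<Rightarrow> nat) \<Rightarrow> nat set \<Rightarrow> nat \<Rightarrow> nat" where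
  "shifted_index h b j = h j + (if j \<in> b then 1 else 0)"

lemma shifted_index_bounds: "h j \<le> shifted_index h b j" "shifted_index h b j \<le> h j + 1"
  unfolding shifted_index_def by simp_all

lemma range_shifted_index_eqD:
  assumes h_gap: "\<And>j. h j + 2 \<le> h (Suc j)"
    and "range (shifted_index h b) = range (shifted_index h b')"
  shows "b = b'"
proof -
  have mem_iff: "j \<in> c \<longleftrightarrow> h j + 1 \<in> range (shifted_index h c)" for c j
  proof
    assume "j \<in> c"
    hence "shifted_index h c j = h j + 1" by (simp add: shifted_index_def)
    thus "h j + 1 \<in> range (shifted_index h c)" by (metis rangeI)
  next
    assume "h j + 1 \<in> range (shifted_index h c)"
    then obtain i where i: "h j + 1 = shifted_index h c i" by auto
    have "i = j"
    proof (rule linorder_cases[of i j])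
      assume "i < j"
      with add_le_of_gaps[of h 2, OF h_gap this] i shifted_index_bounds[where h = h and j = i and b = c] show ?thesis by linarith
    next
      assume "j < i"
      with add_le_of_gaps[of h 2, OF h_gap this] i shifted_index_bounds[where h = h and j = i and b = c] show ?thesis by linarith
    qed
    with i show "j \<in> c" unfolding shifted_index_def by (cases "j \<in> c") simp_all
  qed
  show ?thesis
  proof (rule set_eqI)
    show "j \<in> b \<longleftrightarrow> j \<in> b'" for j using mem_iff[of j b] mem_iff[of j b'] assms(2) by simp
  qed
qed

locale peak_set = a_sequence +
  fixes Q :: nat and S :: "nat set"
  assumes Q_ge_2: "2 \<le> Q" and S_infinite: "infinite S"
    and u_peak: "\<And>m. m \<in> S \<Longrightarrow> 1 \<le> m \<Longrightarrow> u m = Q * u (m - 1)"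
begin

definition pick :: "(nat \<Rightarrow> nat) \<Rightarrow> nat set \<Rightarrow> nat \<Rightarrow> nat" where
  "pick h b j = enumerate S (shifted_index h b j)"

context
  fixes h :: "nat \<Rightarrow> nat"
  assumes h_gap: "\<And>j. h j + 3 \<le> h (Suc j)" and h_0: "1 \<le> h 0"
begin

lemma alternating_point_pick: "alternating_point u Q (pick h b)"
proof unfold_locales
  have index_pos: "1 \<le> shifted_index h b j" for j
    using h_0 add_le_of_gaps[of h 3 0 j, OF h_gap] shifted_index_bounds(1)[where h = h and j = j and b = b]
    by (cases j) simp_all
  have "1 \<le> pick h b j" for j
    using index_pos[of j]
    unfolding pick_def using le_enumerate[OF S_infinite, of "shifted_index h b j"] by linarith
  thus "u (pick h b j) = Q * u (pick h b j - 1)" for j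
    unfolding pick_def by (intro u_peak enumerate_in_set[OF S_infinite])
  show "pick h b 0 \<ge> 1" by fact
  show "pick h b j + 2 \<le> pick h b (Suc j)" for j
  proof -
    let ?a = "shifted_index h b j" and ?c = "shifted_index h b (Suc j)"
    have "?a + 2 \<le> ?c"
      using h_gap[of j] shifted_index_bounds(2)[where h = h and j = j and b = b]
        shifted_index_bounds(1)[where h = h and j = "Suc j" and b = b] by linarith
    thus ?thesis unfolding pick_def using enumerate_add_diff_le[OF S_infinite, of ?a ?c] by linarith
  qed
qed (fact Q_ge_2)

lemma inj_pick_point: "inj (\<lambda>b. alternating_point.point u (pick h b))"
proof (rule injI)
  fix b b' :: "nat set"
  have range_pick: "range (pick h c) = enumerate S ` range (shifted_index h c)" for c
  proof -
    have "pick h c = enumerate S \<circ> shifted_index h c" by (rule ext) (simp add: pick_def)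
    thus ?thesis by (simp add: image_comp)
  qed
  have gap: "h j + 2 \<le> h (Suc j)" for j using h_gap[of j] by simp
  assume "alternating_point.point u (pick h b) = alternating_point.point u (pick h b')"
  hence "range (pick h b) = range (pick h b')"
    by (rule alternating_point_range_eq[OF alternating_point_pick alternating_point_pick])
  hence "range (shifted_index h b) = range (shifted_index h b')"
    unfolding range_pick using inj_enumerate[OF S_infinite] by (simp add: inj_image_eq_iff)
  thus "b = b'" by (rule range_shifted_index_eqD[of h, OF gap])
qed

lemma card_pick_points:
  assumes "\<And>b. alternating_point.point u (pick h b) \<in> T"
  shows "T \<approx> (UNIV :: real set)"
  using inj_pick_point assms by (intro eqpoll_UNIV_real_of_inj) auto

end

lemma card_rho_eq_inv_Q: "{x \<in> {0..<1::real}. rho_u u x 0 = 1 / Q} \<approx> (UNIV :: real set)"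
proof -
  define h where "h j = 1 + 3 * j + j * j" for j :: nat
  have h_gap: "h j + 3 \<le> h (Suc j)" and h_0: "1 \<le> h 0" for j unfolding h_def by simp_all
  show ?thesis
  proof (rule card_pick_points[OF h_gap h_0])
    fix b
    interpret P: alternating_point u Q "pick h b" by (rule alternating_point_pick[OF h_gap h_0])
    have "pick h b j + j \<le> pick h b (Suc j)" for j
    proof -
      let ?a = "shifted_index h b j" and ?c = "shifted_index h b (Suc j)"
      have "?a \<le> ?c" and "j \<le> ?c - ?a" unfolding shifted_index_def h_def by auto
      thus ?thesis using enumerate_add_diff_le[OF S_infinite, of ?a ?c] unfolding pick_def by linarith
    qed
    thus "P.point \<in> {x \<in> {0..<1}. rho_u u x 0 = 1 / Q}"
      using P.point_pos P.point_less_1 P.rho_eq_inv_Q by simp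
  qed
qed

lemma card_rho_less_inv_Q:
  assumes S_gaps: "\<And>k. enumerate S (Suc k) \<le> enumerate S k + C"
    and growth: "\<And>k. u (Suc k) \<le> B * u k"
  shows "{x \<in> {0..<1::real}. rho_u u x 0 < 1 / Q} \<approx> (UNIV :: real set)"
proof -
  define h where "h j = 1 + 3 * j" for j :: nat
  have h_gap: "h j + 3 \<le> h (Suc j)" and h_0: "1 \<le> h 0" for j unfolding h_def by simp_all
  show ?thesis
  proof (rule card_pick_points[OF h_gap h_0])
    fix b
    interpret P: alternating_point u Q "pick h b" by (rule alternating_point_pick[OF h_gap h_0])
    have "pick h b (Suc j) \<le> pick h b j + 4 * C" for j
    proof -
      let ?a = "shifted_index h b j" and ?c = "shifted_index h b (Suc j)"
      have "?a \<le> ?c" and "?c - ?a \<le> 4" unfolding shifted_index_def h_def by auto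
      thus ?thesis
        using le_add_mult_of_gaps[of "enumerate S" C, OF S_gaps, of ?a ?c] mult_le_mono1[of "?c - ?a" 4 C]
        unfolding pick_def by linarith
    qed
    thus "P.point \<in> {x \<in> {0..<1}. rho_u u x 0 < 1 / Q}"
      using P.point_pos P.point_less_1 P.rho_less_inv_Q[of "4 * C", OF _ growth] by simp
  qed
qed

end

theorem propositionC:
  fixes u :: "nat \<Rightarrow> nat"
  assumes "a_seq u"
    and "\<exists>B. \<forall>n. ratio u n \<le> B"
  shows "(\<not> (\<exists>C. \<forall>k. delta u k \<le> C) \<longrightarrow>
            {x \<in> {0..<1::real}. rho_u u x 0 = 1 / q_lim u} \<approx> (UNIV :: real set))
       \<and> ((\<exists>C. \<forall>k. delta u k \<le> C) \<longrightarrow>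
            {x \<in> {0..<1::real}. rho_u u x 0 < 1 / q_lim u} \<approx> (UNIV :: real set))"
proof -
  interpret a_sequence u by (rule a_sequence.intro) (fact assms(1))
  obtain B where B: "\<And>n. ratio u n \<le> B" using assms(2) by blast
  obtain Q where q_lim: "q_lim u = real Q" and "2 \<le> Q" and "infinite {m. ratio u m = Q}"
    using q_lim_recurrent[OF B] by blast
  moreover have S_star: "S_star u = {m. ratio u m = Q}" unfolding S_star_def q_lim by simp
  moreover have "u m = Q * u (m - 1)" if "m \<in> S_star u" and "1 \<le> m" for m
  proof -
    obtain k where "m = Suc k" using \<open>1 \<le> m\<close> by (cases m) auto
    thus ?thesis using u_Suc_eq_ratio_mult[of k] \<open>m \<in> S_star u\<close> unfolding S_star by simp
  qed
  ultimately interpret peak_set u Q "S_star u" by unfold_locales simp_all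
  have growth: "u (Suc k) \<le> B * u k" for k
    using u_Suc_eq_ratio_mult[of k] B[of "Suc k"] by simp
  have "enumerate (S_star u) (Suc k) \<le> enumerate (S_star u) k + C" if "\<forall>k. delta u k \<le> C" for C k
    using that[rule_format, of k] unfolding delta_def by simp
  thus ?thesis using card_rho_eq_inv_Q card_rho_less_inv_Q[OF _ growth] unfolding q_lim by blast
qed

end
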